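(* Let $n\ge 2$, let $\mathcal{S}\subseteq(\mathbb{C}^d)^{\otimes n}$ be the permutation-symmetric subspace, and let $X,Y$ be $d\times d$ complex matrices. Suppose $|\psi\rangle\in\mathcal{S}$, $X_{(1)}|\psi\rangle\in\mathcal{S}$ and $Y_{(2)}|\psi\rangle\in\mathcal{S}$. Then $X_{(1)}Y_{(2)}|\psi\rangle\in\mathcal{S}$ if and only if $[X_{(1)},Y_{(1)}]|\psi\rangle=0$.
   Context: $\mathcal{S}$ is the set of vectors in $(\mathbb{C}^d)^{\otimes n}$ invariant under all permutations of the $n$ tensor factors. For a $d\times d$ matrix $X$ and $1\le k\le n$, $X_{(k)}$ denotes the operator on $(\mathbb{C}^d)^{\otimes n}$ acting as $X$ on the $k$-th tensor factor and as the identity on all others. $[P,Q]=PQ-QP$. *)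

theory Defs
  imports "HOL-Analysis.Analysis" "HOL-Combinatorics.Permutations"
begin

text \<open>A vector in (C^d)^{\<otimes>n} is represented by its coordinates: a function
  from index tuples (lists of length n over the finite basis type 'd, d = CARD('d))
  to complex numbers. Values on lists of other lengths are irrelevant. Tensor factors are numbered from 0.\<close>

definition apply_at :: "nat \<Rightarrow> complex^'d^'d \<Rightarrow> ('d::finite list \<Rightarrow> complex) \<Rightarrow> ('d list \<Rightarrow> complex)" where
  "apply_at k X \<psi> = (\<lambda>xs. \<Sum>j\<in>UNIV. X $ (xs ! k) $ j * \<psi> (xs[k := j]))"

definition permute_factors :: "nat \<Rightarrow> (nat \<Rightarrow> nat) \<Rightarrow> ('d list \<Rightarrow> complex) \<Rightarrow> ('d list \<Rightarrow> complex)" where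
  "permute_factors n \<sigma> \<psi> = (\<lambda>xs. \<psi> (map (\<lambda>i. xs ! \<sigma> i) [0..<n]))"

definition in_sym_subspace :: "nat \<Rightarrow> ('d list \<Rightarrow> complex) \<Rightarrow> bool" where
  "in_sym_subspace n \<psi> \<longleftrightarrow>
     (\<forall>\<sigma>. \<sigma> permutes {..<n} \<longrightarrow> (\<forall>xs. length xs = n \<longrightarrow> permute_factors n \<sigma> \<psi> xs = \<psi> xs))"

end

theory Submission
  imports Defs
begin

text \<open>Permuting the tensor factors of a symmetric vector \<phi> moves the factor on which a
  one-site operator acts, so for symmetric \<phi> the vector X_(k) \<phi> is symmetric iff it does
  not depend on k. Hence X_(a) \<psi> and Y_(b) \<psi> do not depend on a and b, and
  X_(1) Y_(2) \<psi> is symmetric iff X_(c) Y_(2) \<psi> does not depend on c. For c \<noteq> 2 the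
  operators commute and X_(c) Y_(2) \<psi> = Y_(2) X_(1) \<psi> = X_(1) Y_(2) \<psi>; for c = 2 we get
  X_(2) Y_(2) \<psi> = X_(2) Y_(1) \<psi> = Y_(1) X_(1) \<psi>, while X_(1) Y_(2) \<psi> = X_(1) Y_(1) \<psi>.
  (Factors are numbered from 1 here, from 0 in the formal text.)\<close>

definition tensor_eq :: "nat \<Rightarrow> ('d list \<Rightarrow> complex) \<Rightarrow> ('d list \<Rightarrow> complex) \<Rightarrow> bool" where
  "tensor_eq n f g \<longleftrightarrow> (\<forall>xs. length xs = n \<longrightarrow> f xs = g xs)"

lemma tensor_eq_refl [simp]: "tensor_eq n f f"
  by (simp add: tensor_eq_def)

lemma tensor_eq_sym: "tensor_eq n f g \<Longrightarrow> tensor_eq n g f"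
  by (simp add: tensor_eq_def)

lemma tensor_eq_trans [trans]: "tensor_eq n f g \<Longrightarrow> tensor_eq n g h \<Longrightarrow> tensor_eq n f h"
  by (simp add: tensor_eq_def)

lemma in_sym_subspace_iff_tensor_eq:
  "in_sym_subspace n \<psi> \<longleftrightarrow> (\<forall>\<sigma>. \<sigma> permutes {..<n} \<longrightarrow> tensor_eq n (permute_factors n \<sigma> \<psi>) \<psi>)"
  by (simp add: in_sym_subspace_def tensor_eq_def)

lemma apply_at_cong: "tensor_eq n f g \<Longrightarrow> tensor_eq n (apply_at k X f) (apply_at k X g)"
  by (simp add: tensor_eq_def apply_at_def)

lemma apply_at_commute:
  fixes X Y :: "complex^'d::finite^'d"
  assumes "a \<noteq> b"
  shows "apply_at a X (apply_at b Y f) = apply_at b Y (apply_at a X f)"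
proof
  fix xs :: "'d list"
  have "apply_at a X (apply_at b Y f) xs =
      (\<Sum>j\<in>UNIV. \<Sum>i\<in>UNIV. X $ (xs ! a) $ j * (Y $ (xs ! b) $ i * f (xs[a := j, b := i])))"
    using assms by (simp add: apply_at_def sum_distrib_left nth_list_update)
  also have "\<dots> = (\<Sum>i\<in>UNIV. \<Sum>j\<in>UNIV. Y $ (xs ! b) $ i * (X $ (xs ! a) $ j * f (xs[b := i, a := j])))"
    using assms by (subst sum.swap) (simp add: list_update_swap mult.left_commute)
  also have "\<dots> = apply_at b Y (apply_at a X f) xs"
    using assms by (simp add: apply_at_def sum_distrib_left nth_list_update)
  finally show "apply_at a X (apply_at b Y f) xs = apply_at b Y (apply_at a X f) xs" .
qed

lemma permute_factors_apply_at:
  fixes X :: "complex^'d::finite^'d"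
  assumes \<sigma>: "\<sigma> permutes {..<n}" and k: "k < n"
  shows "tensor_eq n (permute_factors n \<sigma> (apply_at k X \<phi>)) (apply_at (\<sigma> k) X (permute_factors n \<sigma> \<phi>))"
  unfolding tensor_eq_def
proof (intro allI impI)
  fix xs :: "'d list"
  assume len: "length xs = n"
  have \<sigma>_less: "\<And>i. i < n \<Longrightarrow> \<sigma> i < n"
    using permutes_in_image[OF \<sigma>] by auto
  have \<sigma>_eq: "\<And>i. \<sigma> i = \<sigma> k \<longleftrightarrow> i = k" "\<And>i. \<sigma> k = \<sigma> i \<longleftrightarrow> i = k"
    using permutes_inj[OF \<sigma>] by (auto dest: injD)
  have "(map (\<lambda>i. xs ! \<sigma> i) [0..<n])[k := j] = map (\<lambda>i. xs[\<sigma> k := j] ! \<sigma> i) [0..<n]" for j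
    by (rule nth_equalityI) (auto simp: nth_list_update len \<sigma>_less \<sigma>_eq k)
  then show "permute_factors n \<sigma> (apply_at k X \<phi>) xs = apply_at (\<sigma> k) X (permute_factors n \<sigma> \<phi>) xs"
    using k by (simp add: permute_factors_def apply_at_def)
qed

lemma permute_factors_apply_at_sym:
  assumes "in_sym_subspace n \<phi>" and \<sigma>: "\<sigma> permutes {..<n}" and "k < n"
  shows "tensor_eq n (permute_factors n \<sigma> (apply_at k X \<phi>)) (apply_at (\<sigma> k) X \<phi>)"
proof -
  have "tensor_eq n (permute_factors n \<sigma> (apply_at k X \<phi>)) (apply_at (\<sigma> k) X (permute_factors n \<sigma> \<phi>))"
    using \<sigma> \<open>k < n\<close> by (rule permute_factors_apply_at)
  also have "tensor_eq n \<dots> (apply_at (\<sigma> k) X \<phi>)"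
    using assms(1) \<sigma> by (intro apply_at_cong) (simp add: in_sym_subspace_iff_tensor_eq)
  finally show ?thesis .
qed

lemma in_sym_subspace_apply_at_iff:
  assumes \<phi>: "in_sym_subspace n \<phi>" and k: "k < n"
  shows "in_sym_subspace n (apply_at k X \<phi>) \<longleftrightarrow>
    (\<forall>c<n. tensor_eq n (apply_at c X \<phi>) (apply_at k X \<phi>))"
proof
  assume sym: "in_sym_subspace n (apply_at k X \<phi>)"
  show "\<forall>c<n. tensor_eq n (apply_at c X \<phi>) (apply_at k X \<phi>)"
  proof (intro allI impI)
    fix c assume "c < n"
    let ?\<tau> = "Transposition.transpose k c"
    have \<tau>: "?\<tau> permutes {..<n}"
      using k \<open>c < n\<close> by (intro permutes_swap_id) auto
    have "tensor_eq n (apply_at c X \<phi>) (permute_factors n ?\<tau> (apply_at k X \<phi>))"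
      using permute_factors_apply_at_sym[OF \<phi> \<tau> k] by (simp add: tensor_eq_sym)
    also have "tensor_eq n \<dots> (apply_at k X \<phi>)"
      using sym \<tau> by (simp add: in_sym_subspace_iff_tensor_eq)
    finally show "tensor_eq n (apply_at c X \<phi>) (apply_at k X \<phi>)" .
  qed
next
  assume indep: "\<forall>c<n. tensor_eq n (apply_at c X \<phi>) (apply_at k X \<phi>)"
  show "in_sym_subspace n (apply_at k X \<phi>)"
    unfolding in_sym_subspace_iff_tensor_eq
  proof (intro allI impI)
    fix \<sigma> assume \<sigma>: "\<sigma> permutes {..<n}"
    have "tensor_eq n (permute_factors n \<sigma> (apply_at k X \<phi>)) (apply_at (\<sigma> k) X \<phi>)"
      using \<phi> \<sigma> k by (rule permute_factors_apply_at_sym)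
    also have "tensor_eq n \<dots> (apply_at k X \<phi>)"
      using indep permutes_in_image[OF \<sigma>] k by auto
    finally show "tensor_eq n (permute_factors n \<sigma> (apply_at k X \<phi>)) (apply_at k X \<phi>)" .
  qed
qed

lemma tensor_eq_apply_at_past_factor:
  assumes "tensor_eq n (apply_at c X \<psi>) (apply_at k X \<psi>)" and "c \<noteq> b" and "k \<noteq> b"
  shows "tensor_eq n (apply_at c X (apply_at b Y \<psi>)) (apply_at k X (apply_at b Y \<psi>))"
proof -
  have "tensor_eq n (apply_at b Y (apply_at c X \<psi>)) (apply_at b Y (apply_at k X \<psi>))"
    using assms(1) by (rule apply_at_cong)
  then show ?thesis
    by (simp only: apply_at_commute[OF assms(2)] apply_at_commute[OF assms(3)])
qed

lemma commutator_tensor_eq_iff: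
  assumes X: "tensor_eq n (apply_at a X \<psi>) (apply_at k X \<psi>)"
    and Y: "tensor_eq n (apply_at a Y \<psi>) (apply_at k Y \<psi>)" and "a \<noteq> k"
  shows "tensor_eq n (apply_at a X (apply_at a Y \<psi>)) (apply_at k X (apply_at a Y \<psi>)) \<longleftrightarrow>
    tensor_eq n (apply_at k X (apply_at k Y \<psi>)) (apply_at k Y (apply_at k X \<psi>))"
proof -
  have "tensor_eq n (apply_at a X (apply_at a Y \<psi>)) (apply_at a X (apply_at k Y \<psi>))"
    using Y by (rule apply_at_cong)
  also have "apply_at a X (apply_at k Y \<psi>) = apply_at k Y (apply_at a X \<psi>)"
    using \<open>a \<noteq> k\<close> by (rule apply_at_commute)
  also have "tensor_eq n \<dots> (apply_at k Y (apply_at k X \<psi>))"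
    using X by (rule apply_at_cong)
  finally have "tensor_eq n (apply_at a X (apply_at a Y \<psi>)) (apply_at k Y (apply_at k X \<psi>))" .
  moreover have "tensor_eq n (apply_at k X (apply_at a Y \<psi>)) (apply_at k X (apply_at k Y \<psi>))"
    using Y by (rule apply_at_cong)
  ultimately show ?thesis
    by (meson tensor_eq_sym tensor_eq_trans)
qed

theorem lemma2:
  fixes n :: nat and X Y :: "complex^'d::finite^'d" and \<psi> :: "'d list \<Rightarrow> complex"
  assumes "n \<ge> 2"
    and "in_sym_subspace n \<psi>"
    and "in_sym_subspace n (apply_at 0 X \<psi>)"
    and "in_sym_subspace n (apply_at 1 Y \<psi>)"
  shows "in_sym_subspace n (apply_at 0 X (apply_at 1 Y \<psi>)) \<longleftrightarrow>
    (\<forall>xs. length xs = n \<longrightarrow>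
       apply_at 0 X (apply_at 0 Y \<psi>) xs - apply_at 0 Y (apply_at 0 X \<psi>) xs = 0)"
proof -
  have "0 < n" "1 < n" using assms(1) by auto
  have X_indep: "\<And>a. a < n \<Longrightarrow> tensor_eq n (apply_at a X \<psi>) (apply_at 0 X \<psi>)"
    using assms(2,3) \<open>0 < n\<close> by (simp add: in_sym_subspace_apply_at_iff)
  have Y_1_0: "tensor_eq n (apply_at 1 Y \<psi>) (apply_at 0 Y \<psi>)"
    using assms(2,4) \<open>0 < n\<close> \<open>1 < n\<close> by (simp add: in_sym_subspace_apply_at_iff tensor_eq_sym)
  have "in_sym_subspace n (apply_at 0 X (apply_at 1 Y \<psi>)) \<longleftrightarrow>
      (\<forall>c<n. tensor_eq n (apply_at c X (apply_at 1 Y \<psi>)) (apply_at 0 X (apply_at 1 Y \<psi>)))"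
    using assms(4) \<open>0 < n\<close> by (rule in_sym_subspace_apply_at_iff)
  also have "\<dots> \<longleftrightarrow> tensor_eq n (apply_at 1 X (apply_at 1 Y \<psi>)) (apply_at 0 X (apply_at 1 Y \<psi>))"
    using X_indep \<open>1 < n\<close> by (metis tensor_eq_apply_at_past_factor tensor_eq_refl zero_neq_one)
  also have "\<dots> \<longleftrightarrow> tensor_eq n (apply_at 0 X (apply_at 0 Y \<psi>)) (apply_at 0 Y (apply_at 0 X \<psi>))"
    using X_indep[OF \<open>1 < n\<close>] Y_1_0 by (rule commutator_tensor_eq_iff) simp
  finally show ?thesis
    by (simp add: tensor_eq_def)
qed

end
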